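(* Assume the reduced model family is $\sigma$-admissible and let $u^*(w)$ be the estimator obtained by surrogate model selection using the residual surrogate $\mathcal S(v,\mathcal M)=\min_{y\in Y}\mathcal R(v,y)$. For $y\in Y$ let $u=u(y)$ and $w=P_Wu$, and let $y^*\in\operatorname{argmin}_{y'\in Y}\mathcal R(u^*(w),y')$. Then $$\|u(y)-u(y^* )\|\le(1+\kappa)\delta_{\kappa\sigma},\qquad\kappa=R/r.$$ If in addition $\delta_0=0$ and $\mu(\mathcal M,W):=\frac12\sup_{\sigma'>0}\delta_{\sigma'}/\sigma'<\infty$, then $$\|u(y)-u(y^* )\|\le(2\mu(\mathcal M,W)+1)\kappa\sigma.$$
   Context: Let $V$ and $Z$ be real Hilbert spaces, with $\|\cdot\|$ the norm of $V$ and $Z'$ the dual of $Z$. Let $Y\subset\mathbb R^d$ be compact. For $y\in Y$ let $A(y):V\to Z'$ be a bounded linear isomorphism and $f(y)\in Z'$, with $y\mapsto A(y)$ and $y\mapsto f(y)$ continuous. Assume there are constants $0<r\le R$ such that $\|A(y)\|_{V\to Z'}\le R$ and $\|A(y)^{-1}\|_{Z'\to V}\le r^{-1}$ for all $y\in Y$. Let $u(y)=A(y)^{-1}f(y)$ and $\mathcal M=\{u(y):y\in Y\}$. Define the residual $\mathcal R(v,y)=\|A(y)v-f(y)\|_{Z'}$, so that $r\|v-u(y)\|\le\mathcal R(v,y)\le R\|v-u(y)\|$. Let $W\subset V$ be a subspace of finite dimension $m$, let $P_W$ be the orthogonal projection onto $W$, and let $W^\perp$ be its orthogonal complement. For $w\in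 W$ put $V_w=w+W^\perp$. For $\sigma\ge0$ define $\mathcal M_\sigma=\{v:\operatorname{dist}(v,\mathcal M)\le\sigma\}$ and $\delta_\sigma=\sup\{\|u-v\|:u,v\in\mathcal M_\sigma,u-v\in W^\perp\}$. For a finite-dimensional subspace $E$ let $\mu(E,W)=\sup_{v\in E\setminus\{0\}}\|v\|/\|P_Wv\|$, with $\mu(\{0\},W)=1$. A reduced model family consists of: - sets $\mathcal M_1,\dots,\mathcal M_K$ with $\mathcal M=\bigcup_k\mathcal M_k$; - affine spaces $V_k=\bar u_k+\bar V_k$ with $\dim\bar V_k=n_k\le m$; - numbers $\varepsilon_k\ge\sup_{u\in\mathcal M_k}\operatorname{dist}(u,V_k)$; - constants $\mu_k=\mu(\bar V_k,W)<\infty$. The family is $\sigma$-admissible if $\mu_k\varepsilon_k\le\sigma$ for all $k$. PBDW estimators: $u_k^*(w)=\operatorname{argmin}\{\operatorname{dist}(v,V_k):v\in V_w\}$. Surrogate model selection picks $k^*(w)$ as a minimizer of $k\mapsto\mathcal S(u_k^*(w),\mathcal M)$ and sets $u^*(w)=u^*_{k^*(w)}(w)$. *)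

theory Defs
  imports "HOL-Analysis.Analysis"
begin

definition orth_proj :: "'v::real_inner set \<Rightarrow> 'v \<Rightarrow> 'v" where
  "orth_proj W v = (THE w. w \<in> W \<and> v - w \<in> orthogonal_comp W)"

definition fin_dim_subspace :: "'v::real_vector set \<Rightarrow> bool" where
  "fin_dim_subspace E \<longleftrightarrow> subspace E \<and> (\<exists>B. finite B \<and> span B = E)"

definition sol :: "('y \<Rightarrow> ('v::real_normed_vector \<Rightarrow>\<^sub>L 'z::real_normed_vector)) \<Rightarrow> ('y \<Rightarrow> 'z) \<Rightarrow> 'y \<Rightarrow> 'v" where
  "sol A f y = (THE v. blinfun_apply (A y) v = f y)"

definition resid :: "('y \<Rightarrow> ('v::real_normed_vector \<Rightarrow>\<^sub>L 'z::real_normed_vector)) \<Rightarrow> ('y \<Rightarrow> 'z) \<Rightarrow> 'v \<Rightarrow> 'y \<Rightarrow> real" where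
  "resid A f v y = norm (blinfun_apply (A y) v - f y)"

definition fattened :: "'v::real_normed_vector set \<Rightarrow> real \<Rightarrow> 'v set" where
  "fattened M s = {v. infdist v M \<le> s}"

definition delta :: "'v::real_inner set \<Rightarrow> 'v set \<Rightarrow> real \<Rightarrow> real" where
  "delta M W s = Sup {norm (u - v) | u v. u \<in> fattened M s \<and> v \<in> fattened M s \<and> u - v \<in> orthogonal_comp W}"

definition mu_EW :: "'v::real_inner set \<Rightarrow> 'v set \<Rightarrow> ereal" where
  "mu_EW E W = (if E - {0} = {} then 1 else
     (SUP v \<in> E - {0}. (if orth_proj W v = 0 then \<infinity> else ereal (norm v / norm (orth_proj W v)))))"

definition mu_MW :: "'v::real_inner set \<Rightarrow> 'v set \<Rightarrow> real" where
  "mu_MW M W = (1/2) * (SUP s \<in> {0<..}. delta M W s / s)"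

end

theory Submission
  imports Defs
begin

text \<open>Write \<open>u = u(y)\<close>, \<open>w = P\<^sub>W u\<close> and let \<open>k\<close> be a model with \<open>u \<in> M\<^sub>k\<close>. The error of the PBDW
  estimate \<open>u\<^sub>k\<^sup>*(w)\<close> lies in \<open>W\<^sup>\<bottom>\<close>; the first-order optimality condition on the fibre \<open>V\<^sub>w\<close>
  splits it into a component orthogonal to \<open>V\<^sub>k\<close> of norm at most \<open>\<epsilon>\<^sub>k\<close> and a component of \<open>V\<^sub>k\<close>,
  which being invisible to \<open>P\<^sub>W\<close> up to the first one is controlled through \<open>\<mu>\<^sub>k\<close>; hence
  \<open>\<parallel>u - u\<^sub>k\<^sup>*(w)\<parallel> \<le> \<mu>\<^sub>k \<epsilon>\<^sub>k \<le> \<sigma>\<close>. Residuals are equivalent to errors up to \<open>r\<close> and \<open>R\<close>, so the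
  estimate \<open>u\<^sup>*(w)\<close> picked by the residual surrogate has residual at most \<open>R \<sigma>\<close> at \<open>y\<^sup>*\<close>, i.e. lies
  within \<open>\<kappa> \<sigma>\<close> of \<open>u(y\<^sup>*) \<in> M\<close>. As also \<open>u - u\<^sup>*(w) \<in> W\<^sup>\<bottom>\<close>, this difference is bounded by
  \<open>\<delta>\<^bsub>\<kappa>\<sigma>\<^esub>\<close>, while minimality of the residual at \<open>y\<^sup>*\<close> gives
  \<open>\<parallel>u\<^sup>*(w) - u(y\<^sup>*)\<parallel> \<le> \<kappa> \<parallel>u - u\<^sup>*(w)\<parallel>\<close>; the triangle inequality yields both bounds.\<close>

section \<open>Orthogonal projection onto a finite-dimensional subspace\<close>

lemma fin_dim_subspace_imp_subspace: "fin_dim_subspace E \<Longrightarrow> subspace E"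
  unfolding fin_dim_subspace_def by blast

lemma orthogonal_compD: "x \<in> orthogonal_comp E \<Longrightarrow> y \<in> E \<Longrightarrow> orthogonal x y"
  unfolding orthogonal_comp_def by (metis (mono_tags) mem_Collect_eq orthogonal_commute)

lemma subspace_diff_translate:
  assumes "subspace S" "u - w \<in> S" "v \<in> (+) w ` S"
  shows "u - v \<in> S"
proof -
  obtain t where "t \<in> S" "v = w + t"
    using assms(3) by blast
  then show ?thesis
    using subspace_diff[OF assms(1,2)] by (simp add: algebra_simps)
qed

lemma fin_dim_subspace_orthogonal_decomp:
  fixes E :: "'v::real_inner set"
  assumes "fin_dim_subspace E"
  obtains p where "p \<in> E" "x - p \<in> orthogonal_comp E"
proof -
  obtain B where "finite B" "span B = E"
    using assms unfolding fin_dim_subspace_def by blast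
  then obtain C where C: "finite C" "span C = E" "pairwise orthogonal C"
    using basis_orthogonal by metis
  define p where "p = (\<Sum>c\<in>C. (c \<bullet> x / (c \<bullet> c)) *\<^sub>R c)"
  have "p \<in> E"
    unfolding p_def C(2)[symmetric] by (intro span_sum span_scale span_base)
  moreover have "orthogonal (x - p) c" if "c \<in> C" for c
  proof -
    have "c \<bullet> p = (\<Sum>c'\<in>C. if c' = c then c \<bullet> x else 0)"
      unfolding p_def inner_sum_right inner_scaleR_right
    proof (rule sum.cong)
      fix c' assume "c' \<in> C"
      then show "c' \<bullet> x / (c' \<bullet> c') * (c \<bullet> c') = (if c' = c then c \<bullet> x else 0)"
        using C(3) \<open>c \<in> C\<close> by (auto simp: pairwise_def orthogonal_def inner_commute)
    qed simp
    then show ?thesis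
      using C(1) \<open>c \<in> C\<close> by (simp add: orthogonal_def inner_diff_right inner_commute)
  qed
  then have "orthogonal y (x - p)" if "y \<in> E" for y
    using orthogonal_to_span C(2) that orthogonal_commute by metis
  then have "x - p \<in> orthogonal_comp E"
    unfolding orthogonal_comp_def by blast
  ultimately show thesis
    using that by blast
qed

lemma orthogonal_decomp_unique:
  fixes E :: "'v::real_inner set"
  assumes "subspace E" "p \<in> E" "x - p \<in> orthogonal_comp E" "q \<in> E" "x - q \<in> orthogonal_comp E"
  shows "p = q"
proof -
  have "(x - q) - (x - p) \<in> orthogonal_comp E"
    using assms subspace_orthogonal_comp subspace_diff by blast
  moreover have "p - q \<in> E"
    using assms subspace_diff by blast
  ultimately have "orthogonal (p - q) (p - q)"
    by (simp add: orthogonal_compD)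
  then show ?thesis
    by (simp add: orthogonal_self)
qed

lemma
  fixes E :: "'v::real_inner set"
  assumes "fin_dim_subspace E"
  shows orth_proj_in: "orth_proj E x \<in> E"
    and orth_proj_residual: "x - orth_proj E x \<in> orthogonal_comp E"
proof -
  have "\<exists>!p. p \<in> E \<and> x - p \<in> orthogonal_comp E"
    using fin_dim_subspace_orthogonal_decomp[OF assms]
      orthogonal_decomp_unique[OF fin_dim_subspace_imp_subspace[OF assms]] by metis
  from theI'[OF this] show "orth_proj E x \<in> E" "x - orth_proj E x \<in> orthogonal_comp E"
    unfolding orth_proj_def by auto
qed

lemma orth_proj_eqI:
  fixes E :: "'v::real_inner set"
  assumes "fin_dim_subspace E" "p \<in> E" "x - p \<in> orthogonal_comp E"
  shows "orth_proj E x = p"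
  using assms orth_proj_in orth_proj_residual
    orthogonal_decomp_unique[OF fin_dim_subspace_imp_subspace] by metis

lemma linear_orth_proj:
  fixes E :: "'v::real_inner set"
  assumes E: "fin_dim_subspace E"
  shows "linear (orth_proj E)"
proof (rule linearI)
  have sE: "subspace E" "subspace (orthogonal_comp E)"
    using E by (simp_all add: fin_dim_subspace_imp_subspace subspace_orthogonal_comp)
  show "orth_proj E (x + y) = orth_proj E x + orth_proj E y" for x y
  proof (rule orth_proj_eqI[OF E])
    show "orth_proj E x + orth_proj E y \<in> E"
      using sE orth_proj_in[OF E] subspace_add by blast
    have "(x - orth_proj E x) + (y - orth_proj E y) \<in> orthogonal_comp E"
      using sE orth_proj_residual[OF E] subspace_add by blast
    then show "x + y - (orth_proj E x + orth_proj E y) \<in> orthogonal_comp E"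
      by (simp add: algebra_simps)
  qed
  show "orth_proj E (c *\<^sub>R x) = c *\<^sub>R orth_proj E x" for c x
  proof (rule orth_proj_eqI[OF E])
    show "c *\<^sub>R orth_proj E x \<in> E"
      using sE orth_proj_in[OF E] subspace_scale by blast
    have "c *\<^sub>R (x - orth_proj E x) \<in> orthogonal_comp E"
      using sE orth_proj_residual[OF E] subspace_scale by blast
    then show "c *\<^sub>R x - c *\<^sub>R orth_proj E x \<in> orthogonal_comp E"
      by (simp add: algebra_simps)
  qed
qed

lemma orth_proj_orthogonal_comp:
  fixes E :: "'v::real_inner set"
  assumes "fin_dim_subspace E" "x \<in> orthogonal_comp E"
  shows "orth_proj E x = 0"
  using assms by (intro orth_proj_eqI) (auto simp: fin_dim_subspace_imp_subspace subspace_0)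

lemma norm_orth_proj_le:
  fixes E :: "'v::real_inner set"
  assumes "fin_dim_subspace E"
  shows "norm (orth_proj E x) \<le> norm x"
proof -
  have "orthogonal (orth_proj E x) (x - orth_proj E x)"
    using assms orth_proj_in orth_proj_residual orthogonal_compD orthogonal_commute by metis
  then have "(norm x)\<^sup>2 = (norm (orth_proj E x))\<^sup>2 + (norm (x - orth_proj E x))\<^sup>2"
    using norm_add_Pythagorean by fastforce
  then have "(norm (orth_proj E x))\<^sup>2 \<le> (norm x)\<^sup>2"
    by simp
  then show ?thesis
    by (rule power2_le_imp_le) simp
qed

lemma infdist_affine_fin_dim_subspace:
  fixes E :: "'v::real_inner set"
  assumes E: "fin_dim_subspace E"
  shows "infdist z ((+) c ` E) = norm ((z - c) - orth_proj E (z - c))"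
proof (rule antisym)
  let ?p = "orth_proj E (z - c)"
  have "c + ?p \<in> (+) c ` E"
    using orth_proj_in[OF E] by blast
  then have "infdist z ((+) c ` E) \<le> dist z (c + ?p)"
    by (rule infdist_le)
  then show "infdist z ((+) c ` E) \<le> norm ((z - c) - ?p)"
    by (simp add: dist_norm algebra_simps)
  have ne: "(+) c ` E \<noteq> {}"
    using \<open>c + ?p \<in> (+) c ` E\<close> by blast
  show "norm ((z - c) - ?p) \<le> infdist z ((+) c ` E)"
    unfolding infdist_notempty[OF ne]
  proof (rule cINF_greatest[OF ne])
    fix a assume "a \<in> (+) c ` E"
    then obtain q where q: "q \<in> E" "a = c + q"
      by blast
    have "?p - q \<in> E"
      using E q(1) orth_proj_in fin_dim_subspace_imp_subspace subspace_diff by blast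
    then have "orthogonal ((z - c) - ?p) (?p - q)"
      using E orth_proj_residual orthogonal_compD by blast
    then have "(norm (z - a))\<^sup>2 = (norm ((z - c) - ?p))\<^sup>2 + (norm (?p - q))\<^sup>2"
      using norm_add_Pythagorean q(2) by (metis (no_types, lifting) diff_add_cancel diff_diff_eq)
    then have "(norm ((z - c) - ?p))\<^sup>2 \<le> (norm (z - a))\<^sup>2"
      by simp
    then show "norm ((z - c) - ?p) \<le> dist z a"
      unfolding dist_norm by (rule power2_le_imp_le) simp
  qed
qed

section \<open>Stability of the PBDW estimator\<close>

lemma mu_EW_finiteE:
  fixes W E :: "'v::real_inner set"
  assumes W: "fin_dim_subspace W" and fin: "mu_EW E W < \<infinity>"
  obtains \<mu> where "mu_EW E W = ereal \<mu>" "1 \<le> \<mu>"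
    "\<And>g. g \<in> E \<Longrightarrow> norm g \<le> \<mu> * norm (orth_proj W g)"
proof (cases "E - {0} = {}")
  case True
  then show thesis
    using that[of 1] unfolding mu_EW_def by force
next
  case False
  have ratio: "orth_proj W v \<noteq> 0 \<and> ereal (norm v / norm (orth_proj W v)) \<le> mu_EW E W"
    if v: "v \<in> E - {0}" for v
  proof -
    have "(if orth_proj W v = 0 then \<infinity> else ereal (norm v / norm (orth_proj W v))) \<le> mu_EW E W"
      unfolding mu_EW_def if_not_P[OF False] using v by (rule SUP_upper)
    then show ?thesis
      using fin by (auto split: if_splits)
  qed
  obtain v0 where v0: "v0 \<in> E - {0}"
    using False by blast
  have "1 \<le> norm v0 / norm (orth_proj W v0)"
    using ratio[OF v0] norm_orth_proj_le[OF W, of v0] by simp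
  then have "ereal 1 \<le> mu_EW E W"
    using ratio[OF v0] by (meson ereal_less_eq(3) order_trans)
  then obtain \<mu> where \<mu>: "mu_EW E W = ereal \<mu>" "1 \<le> \<mu>"
    using fin by (cases "mu_EW E W") auto
  have "norm g \<le> \<mu> * norm (orth_proj W g)" if g: "g \<in> E" for g
  proof (cases "g = 0")
    case False
    then have "orth_proj W g \<noteq> 0" "norm g / norm (orth_proj W g) \<le> \<mu>"
      using ratio[of g] g \<mu>(1) by auto
    then show ?thesis
      by (simp add: divide_le_eq mult.commute)
  qed (use \<mu>(2) in simp)
  with \<mu> that show thesis
    by blast
qed

lemma orthogonal_if_norm_le_add_scaleR:
  fixes a x :: "'a::real_inner"
  assumes min: "\<And>l. norm a \<le> norm (a + l *\<^sub>R x)"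
  shows "orthogonal a x"
proof (cases "x = 0")
  case False
  then have xx: "0 < x \<bullet> x"
    by simp
  define l where "l = - (a \<bullet> x) / (x \<bullet> x)"
  have "a \<bullet> a \<le> (a + l *\<^sub>R x) \<bullet> (a + l *\<^sub>R x)"
    using min[of l] by (simp add: power_mono flip: power2_norm_eq_inner)
  also have "\<dots> = a \<bullet> a + 2 * l * (a \<bullet> x) + l\<^sup>2 * (x \<bullet> x)"
    by (simp add: inner_add_left inner_add_right inner_commute power2_eq_square algebra_simps)
  also have "\<dots> = a \<bullet> a - (a \<bullet> x)\<^sup>2 / (x \<bullet> x)"
    using xx unfolding l_def by (simp add: field_simps power2_eq_square)
  finally have "(a \<bullet> x)\<^sup>2 \<le> 0"
    using xx by (simp add: divide_le_0_iff)
  then show ?thesis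
    by (simp add: orthogonal_def)
qed (simp add: orthogonal_clauses)

lemma pbdw_residual_orthogonal:
  fixes W V :: "'v::real_inner set"
  assumes V: "fin_dim_subspace V"
    and us: "us \<in> (+) w ` orthogonal_comp W"
    and opt: "\<forall>v\<in>(+) w ` orthogonal_comp W. infdist us ((+) c ` V) \<le> infdist v ((+) c ` V)"
    and t: "t \<in> orthogonal_comp W"
  shows "orthogonal ((us - c) - orth_proj V (us - c)) (t - orth_proj V t)"
proof (rule orthogonal_if_norm_le_add_scaleR)
  fix l :: real
  have lin: "linear (orth_proj V)"
    by (rule linear_orth_proj[OF V])
  obtain t0 where t0: "t0 \<in> orthogonal_comp W" "us = w + t0"
    using us by blast
  have "t0 + l *\<^sub>R t \<in> orthogonal_comp W"
    using t t0(1) subspace_orthogonal_comp subspace_scale subspace_add by blast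
  moreover have "us + l *\<^sub>R t = w + (t0 + l *\<^sub>R t)"
    using t0(2) by simp
  ultimately have "us + l *\<^sub>R t \<in> (+) w ` orthogonal_comp W"
    by (rule rev_image_eqI)
  then have "infdist us ((+) c ` V) \<le> infdist (us + l *\<^sub>R t) ((+) c ` V)"
    using opt by blast
  moreover have "(us + l *\<^sub>R t - c) - orth_proj V (us + l *\<^sub>R t - c)
      = ((us - c) - orth_proj V (us - c)) + l *\<^sub>R (t - orth_proj V t)"
    using linear_add[OF lin, of "us - c" "l *\<^sub>R t"] linear_scale[OF lin, of l t]
    by (simp add: algebra_simps)
  ultimately show "norm ((us - c) - orth_proj V (us - c))
      \<le> norm ((us - c) - orth_proj V (us - c) + l *\<^sub>R (t - orth_proj V t))"
    by (simp add: infdist_affine_fin_dim_subspace[OF V])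
qed

lemma pbdw_stability:
  fixes W :: "'v::real_inner set"
  assumes W: "fin_dim_subspace W" and e: "e \<in> orthogonal_comp W"
    and edg: "e = d + g" and dg: "orthogonal d g"
    and g: "norm g \<le> \<mu> * norm (orth_proj W g)" and \<mu>: "1 \<le> \<mu>"
  shows "norm e \<le> \<mu> * norm d"
proof -
  define p where "p = orth_proj W d"
  define \<alpha> where "\<alpha> = norm (d - p)"
  define \<beta> where "\<beta> = norm p"
  have "orth_proj W d + orth_proj W g = 0"
    using linear_add[OF linear_orth_proj[OF W], of d g] orth_proj_orthogonal_comp[OF W e] edg
    by simp
  then have "norm g \<le> \<mu> * \<beta>"
    using g unfolding \<beta>_def p_def by (metis add.inverse_unique norm_minus_cancel)
  then have G: "(norm g)\<^sup>2 \<le> \<mu>\<^sup>2 * \<beta>\<^sup>2"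
    by (metis norm_ge_zero power_mono power_mult_distrib)
  have "orthogonal (d - p) p"
    using W orth_proj_in orth_proj_residual orthogonal_compD unfolding p_def by blast
  then have D: "(norm d)\<^sup>2 = \<alpha>\<^sup>2 + \<beta>\<^sup>2"
    unfolding \<alpha>_def \<beta>_def using norm_add_Pythagorean by fastforce
  have E: "(norm e)\<^sup>2 = (norm d)\<^sup>2 + (norm g)\<^sup>2"
    using norm_add_Pythagorean[OF dg] edg by simp
  have "e \<bullet> p = 0"
    using orthogonal_compD[OF e] orth_proj_in[OF W] unfolding p_def orthogonal_def by blast
  moreover have "e \<bullet> d = (norm d)\<^sup>2"
    using dg by (simp add: edg inner_add_left inner_add_right power2_norm_eq_inner orthogonal_def inner_commute)
  ultimately have "(norm d)\<^sup>2 = e \<bullet> (d - p)"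
    by (simp add: inner_diff_right)
  then have CS: "(norm d)\<^sup>2 \<le> norm e * \<alpha>"
    unfolding \<alpha>_def by (metis norm_cauchy_schwarz)
  have key: "(norm d)\<^sup>2 \<le> \<mu>\<^sup>2 * \<alpha>\<^sup>2"
  proof (cases "\<beta> = 0")
    case True
    have "1 \<le> \<mu>\<^sup>2"
      using \<mu> by (rule one_le_power)
    then show ?thesis
      using True D mult_right_mono[of 1 "\<mu>\<^sup>2" "\<alpha>\<^sup>2"] by simp
  next
    case False
    have "(norm d)\<^sup>2 * (norm d)\<^sup>2 \<le> (norm e * \<alpha>) * (norm e * \<alpha>)"
      by (rule mult_mono[OF CS CS]) (simp_all add: \<alpha>_def)
    also have "\<dots> = (norm e)\<^sup>2 * \<alpha>\<^sup>2"
      by algebra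
    also have "\<dots> \<le> ((norm d)\<^sup>2 + \<mu>\<^sup>2 * \<beta>\<^sup>2) * \<alpha>\<^sup>2"
      unfolding E using G by (intro mult_right_mono) simp_all
    also have "\<dots> = (norm d)\<^sup>2 * \<alpha>\<^sup>2 + (\<mu>\<^sup>2 * \<alpha>\<^sup>2) * \<beta>\<^sup>2"
      by (simp add: algebra_simps)
    finally have "(norm d)\<^sup>2 * \<beta>\<^sup>2 \<le> (\<mu>\<^sup>2 * \<alpha>\<^sup>2) * \<beta>\<^sup>2"
      unfolding D distrib_left by linarith
    then show ?thesis
      using False by simp
  qed
  have "(norm e)\<^sup>2 \<le> \<mu>\<^sup>2 * \<alpha>\<^sup>2 + \<mu>\<^sup>2 * \<beta>\<^sup>2"
    using E G key by linarith
  also have "\<dots> = (\<mu> * norm d)\<^sup>2"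
    unfolding power_mult_distrib D by algebra
  finally show ?thesis
    by (rule power2_le_imp_le) (use \<mu> in simp)
qed

lemma pbdw_error_le:
  fixes W V :: "'v::real_inner set"
  assumes W: "fin_dim_subspace W" and V: "fin_dim_subspace V"
    and fin: "mu_EW V W < \<infinity>" and adm: "mu_EW V W * ereal eps \<le> ereal \<sigma>"
    and u_eps: "infdist u ((+) c ` V) \<le> eps"
    and uw: "u - w \<in> orthogonal_comp W"
    and us: "us \<in> (+) w ` orthogonal_comp W"
    and opt: "\<forall>v\<in>(+) w ` orthogonal_comp W. infdist us ((+) c ` V) \<le> infdist v ((+) c ` V)"
  shows "norm (u - us) \<le> \<sigma>"
proof -
  obtain \<mu> where \<mu>: "mu_EW V W = ereal \<mu>" "1 \<le> \<mu>"
    "\<And>g. g \<in> V \<Longrightarrow> norm g \<le> \<mu> * norm (orth_proj W g)"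
    using mu_EW_finiteE[OF W fin] by blast
  define e where "e = u - us"
  have e: "e \<in> orthogonal_comp W"
    unfolding e_def by (rule subspace_diff_translate[OF subspace_orthogonal_comp uw us])
  define a where "a = (us - c) - orth_proj V (us - c)"
  define d where "d = e - orth_proj V e"
  define g where "g = orth_proj V e"
  have "(u - c) - orth_proj V (u - c) = a + d"
    using linear_add[OF linear_orth_proj[OF V], of "us - c" e]
    unfolding a_def d_def e_def by (simp add: algebra_simps)
  moreover have "orthogonal a d"
    unfolding a_def d_def by (rule pbdw_residual_orthogonal[OF V us opt e])
  ultimately have "(infdist u ((+) c ` V))\<^sup>2 = (norm a)\<^sup>2 + (norm d)\<^sup>2"
    by (simp add: infdist_affine_fin_dim_subspace[OF V] norm_add_Pythagorean)
  then have "(norm d)\<^sup>2 \<le> (infdist u ((+) c ` V))\<^sup>2"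
    by simp
  then have "norm d \<le> infdist u ((+) c ` V)"
    by (rule power2_le_imp_le) (rule infdist_nonneg)
  then have "norm d \<le> eps"
    using u_eps by linarith
  have "norm e \<le> \<mu> * norm d"
  proof (rule pbdw_stability[OF W e _ _ _ \<mu>(2)])
    show "e = d + g"
      unfolding d_def g_def by simp
    show "orthogonal d g"
      unfolding d_def g_def using orthogonal_compD[OF orth_proj_residual orth_proj_in] V by blast
    show "norm g \<le> \<mu> * norm (orth_proj W g)"
      unfolding g_def using V orth_proj_in \<mu>(3) by blast
  qed
  also have "\<dots> \<le> \<mu> * eps"
    using \<open>norm d \<le> eps\<close> \<mu>(2) by simp
  also have "\<dots> \<le> \<sigma>"
    using adm \<mu>(1) by simp
  finally show ?thesis
    unfolding e_def .
qed

section \<open>Residuals, the solution manifold and its widths\<close>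

lemma resid_bounds:
  fixes A :: "'y \<Rightarrow> ('v::real_normed_vector \<Rightarrow>\<^sub>L 'z::real_normed_vector)"
  assumes iso: "\<forall>y\<in>Y. \<exists>Ainv :: 'z \<Rightarrow>\<^sub>L 'v. (\<forall>v. blinfun_apply Ainv (blinfun_apply (A y) v) = v)
                 \<and> (\<forall>z. blinfun_apply (A y) (blinfun_apply Ainv z) = z) \<and> norm Ainv \<le> inverse r"
    and r: "0 < r" and R: "\<forall>y\<in>Y. norm (A y) \<le> R" and y: "y \<in> Y"
  shows "r * norm (v - sol A f y) \<le> resid A f v y \<and> resid A f v y \<le> R * norm (v - sol A f y)"
proof -
  obtain Ainv :: "'z \<Rightarrow>\<^sub>L 'v" where left: "\<And>v. blinfun_apply Ainv (blinfun_apply (A y) v) = v"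
    and right: "\<And>z. blinfun_apply (A y) (blinfun_apply Ainv z) = z" and Ainv: "norm Ainv \<le> inverse r"
    using iso y by blast
  have "sol A f y = blinfun_apply Ainv (f y)"
    unfolding sol_def
  proof (rule the_equality)
    fix x assume "blinfun_apply (A y) x = f y"
    then show "x = blinfun_apply Ainv (f y)"
      using left[of x] by simp
  qed (rule right)
  then have res: "resid A f v y = norm (blinfun_apply (A y) (v - sol A f y))"
    unfolding resid_def by (simp add: blinfun.diff_right right)
  have "norm (v - sol A f y) = norm (blinfun_apply Ainv (blinfun_apply (A y) (v - sol A f y)))"
    by (simp add: left)
  also have "\<dots> \<le> norm Ainv * resid A f v y"
    unfolding res by (rule norm_blinfun)
  also have "\<dots> \<le> inverse r * resid A f v y"
    using Ainv by (simp add: mult_right_mono resid_def)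
  finally have "r * norm (v - sol A f y) \<le> resid A f v y"
    using r by (simp add: field_simps)
  moreover have "resid A f v y \<le> R * norm (v - sol A f y)"
    unfolding res using norm_blinfun[of "A y"] R y by (meson mult_right_mono norm_ge_zero order_trans)
  ultimately show ?thesis ..
qed

lemma bounded_sol_image:
  fixes A :: "'y::topological_space \<Rightarrow> ('v::real_normed_vector \<Rightarrow>\<^sub>L 'z::real_normed_vector)"
  assumes "compact Y" "continuous_on Y f" "0 < r"
    and lower: "\<And>y. y \<in> Y \<Longrightarrow> r * norm (0 - sol A f y) \<le> resid A f 0 y"
  shows "bounded (sol A f ` Y)"
proof -
  obtain C where C: "\<And>y. y \<in> Y \<Longrightarrow> norm (f y) \<le> C"
    using compact_imp_bounded[OF compact_continuous_image[OF assms(2,1)]]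
    unfolding bounded_iff by blast
  have "norm (sol A f y) \<le> C / r" if "y \<in> Y" for y
    using lower[OF that] C[OF that] \<open>0 < r\<close> by (simp add: resid_def field_simps)
  then show ?thesis
    unfolding bounded_iff by blast
qed

lemma fattened_memI: "m \<in> M \<Longrightarrow> dist v m \<le> s \<Longrightarrow> v \<in> fattened M s"
  unfolding fattened_def by (auto intro: order_trans[OF infdist_le])

lemma bounded_fattened:
  fixes M :: "'v::real_normed_vector set"
  assumes "bounded M" "M \<noteq> {}"
  shows "bounded (fattened M s)"
proof -
  obtain B where B: "\<And>m. m \<in> M \<Longrightarrow> norm m \<le> B"
    using assms(1) unfolding bounded_iff by blast
  have "norm v \<le> B + s" if "v \<in> fattened M s" for v
  proof -
    have "norm v - B \<le> dist v m" if "m \<in> M" for m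
      using norm_triangle_sub[of v m] B[OF that] by (simp add: dist_norm)
    then have "norm v - B \<le> infdist v M"
      unfolding infdist_notempty[OF assms(2)] by (intro cINF_greatest[OF assms(2)])
    then show ?thesis
      using that unfolding fattened_def by simp
  qed
  then show ?thesis
    unfolding bounded_iff by blast
qed

lemma norm_diff_le_delta:
  fixes M W :: "'v::real_inner set"
  assumes "bounded M" "M \<noteq> {}"
    and "a \<in> fattened M s" "b \<in> fattened M s" "a - b \<in> orthogonal_comp W"
  shows "norm (a - b) \<le> delta M W s"
proof -
  obtain B where B: "\<And>v. v \<in> fattened M s \<Longrightarrow> norm v \<le> B"
    using bounded_fattened[OF assms(1,2)] unfolding bounded_iff by blast
  have "bdd_above {norm (u - v) |u v. u \<in> fattened M s \<and> v \<in> fattened M s \<and> u - v \<in> orthogonal_comp W}"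
  proof (rule bdd_aboveI[of _ "B + B"], clarify)
    fix u v assume "u \<in> fattened M s" "v \<in> fattened M s"
    then show "norm (u - v) \<le> B + B"
      using norm_triangle_ineq4[of u v] B by (meson add_mono order_trans)
  qed
  then show ?thesis
    unfolding delta_def using assms(3-5) by (intro cSup_upper) blast+
qed

lemma delta_le_mu_MW:
  assumes "delta M W 0 = 0" "bdd_above ((\<lambda>s. delta M W s / s) ` {0<..})" "0 \<le> s"
  shows "delta M W s \<le> 2 * mu_MW M W * s"
proof (cases "s = 0")
  case False
  then have "delta M W s / s \<le> (SUP s\<in>{0<..}. delta M W s / s)"
    using assms(2,3) by (intro cSUP_upper) auto
  then show ?thesis
    using False assms(3) unfolding mu_MW_def by (simp add: divide_le_eq)
qed (use assms(1) in simp)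

section \<open>Model selection by the residual surrogate\<close>

lemma residual_selection_error:
  fixes res :: "'v::real_normed_vector \<Rightarrow> 'y \<Rightarrow> real" and u :: "'y \<Rightarrow> 'v"
  assumes equiv: "\<And>v y. y \<in> Y \<Longrightarrow> r * norm (v - u y) \<le> res v y \<and> res v y \<le> R * norm (v - u y)"
    and r: "0 < r" and y: "y \<in> Y" and ystar: "ystar \<in> Y"
    and min: "\<forall>y'\<in>Y. res v ystar \<le> res v y'"
    and sel: "(INF y'\<in>Y. res v y') \<le> (INF y'\<in>Y. res v' y')"
  shows "norm (v - u ystar) \<le> R / r * norm (v' - u y)"
    and "norm (v - u ystar) \<le> R / r * norm (v - u y)"
proof -
  have scale: "a \<le> R / r * b" if "r * a \<le> R * b" for a b
    using that r by (simp add: field_simps mult.commute)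
  have lower: "r * norm (v - u ystar) \<le> res v ystar"
    using equiv[OF ystar] by blast
  have nonneg: "0 \<le> res v'' y'" if "y' \<in> Y" for v'' y'
    using equiv[OF that, of v''] r by (meson less_imp_le mult_nonneg_nonneg norm_ge_zero order_trans)
  have "res v ystar \<le> (INF y'\<in>Y. res v y')"
    using min y by (intro cINF_greatest) auto
  also have "\<dots> \<le> (INF y'\<in>Y. res v' y')"
    by (rule sel)
  also have "\<dots> \<le> res v' y"
    using nonneg by (intro cINF_lower[OF bdd_belowI2 y])
  also have "\<dots> \<le> R * norm (v' - u y)"
    using equiv[OF y] by blast
  finally show "norm (v - u ystar) \<le> R / r * norm (v' - u y)"
    using lower by (intro scale) linarith
  have "res v ystar \<le> R * norm (v - u y)"
    using min y equiv[OF y, of v] by fastforce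
  then show "norm (v - u ystar) \<le> R / r * norm (v - u y)"
    using lower by (intro scale) linarith
qed

lemma error_bounds_via_estimate:
  fixes M W :: "'v::real_inner set"
  assumes M: "bounded M" "u \<in> M" "u' \<in> M" and uv: "u - v \<in> orthogonal_comp W"
    and quasi: "norm (v - u') \<le> \<kappa> * norm (u - v)" and close: "norm (v - u') \<le> \<kappa> * \<sigma>"
    and "0 \<le> \<kappa>" "0 \<le> \<sigma>"
  shows "norm (u - u') \<le> (1 + \<kappa>) * delta M W (\<kappa> * \<sigma>)
       \<and> ((delta M W 0 = 0 \<and> bdd_above ((\<lambda>s. delta M W s / s) ` {0<..}))
           \<longrightarrow> norm (u - u') \<le> (2 * mu_MW M W + 1) * \<kappa> * \<sigma>)"
proof (intro conjI impI)
  have "u \<in> fattened M (\<kappa> * \<sigma>)"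
    using \<open>0 \<le> \<kappa>\<close> \<open>0 \<le> \<sigma>\<close> by (intro fattened_memI[OF M(2)]) simp
  moreover have "v \<in> fattened M (\<kappa> * \<sigma>)"
    using close by (intro fattened_memI[OF M(3)]) (simp add: dist_norm)
  ultimately have perp: "norm (u - v) \<le> delta M W (\<kappa> * \<sigma>)"
    using norm_diff_le_delta M uv by blast
  have tri: "norm (u - u') \<le> norm (u - v) + norm (v - u')"
    using norm_triangle_ineq[of "u - v" "v - u'"] by simp
  have "norm (u - u') \<le> (1 + \<kappa>) * norm (u - v)"
    using tri quasi by (simp add: algebra_simps)
  also have "\<dots> \<le> (1 + \<kappa>) * delta M W (\<kappa> * \<sigma>)"
    using perp \<open>0 \<le> \<kappa>\<close> by (intro mult_left_mono) auto
  finally show "norm (u - u') \<le> (1 + \<kappa>) * delta M W (\<kappa> * \<sigma>)" .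
  assume "delta M W 0 = 0 \<and> bdd_above ((\<lambda>s. delta M W s / s) ` {0<..})"
  then have "norm (u - v) \<le> 2 * mu_MW M W * (\<kappa> * \<sigma>)"
    using perp delta_le_mu_MW[of M W "\<kappa> * \<sigma>"] \<open>0 \<le> \<kappa>\<close> \<open>0 \<le> \<sigma>\<close>
    by (meson order_trans zero_le_mult_iff)
  then show "norm (u - u') \<le> (2 * mu_MW M W + 1) * \<kappa> * \<sigma>"
    using tri close by (simp add: algebra_simps)
qed

theorem mainTheorem7:
  fixes Y :: "(real ^ 'd) set"
    and A :: "real ^ 'd \<Rightarrow> ('v::{real_inner, complete_space} \<Rightarrow>\<^sub>L 'z::{real_inner, complete_space})"
    and f :: "real ^ 'd \<Rightarrow> 'z"
    and r R :: real
    and M :: "'v set"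
    and W :: "'v set"
    and K :: nat
    and Mk :: "nat \<Rightarrow> 'v set"
    and ubar :: "nat \<Rightarrow> 'v"
    and Vbar :: "nat \<Rightarrow> 'v set"
    and eps :: "nat \<Rightarrow> real"
    and \<sigma> :: real
    and ustar :: "nat \<Rightarrow> 'v \<Rightarrow> 'v"
    and kstar :: "'v \<Rightarrow> nat"
    and y ystar :: "real ^ 'd"
  assumes Y_compact: "compact Y"
    and A_cont: "continuous_on Y A"
    and f_cont: "continuous_on Y f"
    and rR: "0 < r" "r \<le> R"
    and A_bound: "\<forall>y\<in>Y. norm (A y) \<le> R"
    and A_iso: "\<forall>y\<in>Y. \<exists>Ainv :: 'z \<Rightarrow>\<^sub>L 'v.
                   (\<forall>v. blinfun_apply Ainv (blinfun_apply (A y) v) = v)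
                 \<and> (\<forall>z. blinfun_apply (A y) (blinfun_apply Ainv z) = z)
                 \<and> norm Ainv \<le> inverse r"
    and M_def: "M = sol A f ` Y"
    and W_fd: "fin_dim_subspace W"
    and M_cover: "M = (\<Union>k<K. Mk k)"
    and Vbar_fd: "\<forall>k<K. fin_dim_subspace (Vbar k) \<and> dim (Vbar k) \<le> dim W"
    and eps_bound: "\<forall>k<K. \<forall>u\<in>Mk k. infdist u ((+) (ubar k) ` Vbar k) \<le> eps k"
    and mu_finite: "\<forall>k<K. mu_EW (Vbar k) W < \<infinity>"
    and sigma_nonneg: "0 \<le> \<sigma>"
    and admissible: "\<forall>k<K. mu_EW (Vbar k) W * ereal (eps k) \<le> ereal \<sigma>"
    and pbdw: "\<forall>k<K. \<forall>w\<in>W.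
                 ustar k w \<in> (+) w ` orthogonal_comp W
               \<and> (\<forall>v\<in>(+) w ` orthogonal_comp W.
                    infdist (ustar k w) ((+) (ubar k) ` Vbar k) \<le> infdist v ((+) (ubar k) ` Vbar k))"
    and selection: "\<forall>w\<in>W. kstar w < K \<and>
                 (\<forall>k<K. (INF y'\<in>Y. resid A f (ustar (kstar w) w) y')
                         \<le> (INF y'\<in>Y. resid A f (ustar k w) y'))"
    and y_in: "y \<in> Y"
    and ystar_in: "ystar \<in> Y"
    and ystar_min: "\<forall>y'\<in>Y.
          resid A f (ustar (kstar (orth_proj W (sol A f y))) (orth_proj W (sol A f y))) ystar
        \<le> resid A f (ustar (kstar (orth_proj W (sol A f y))) (orth_proj W (sol A f y))) y'"
  shows "norm (sol A f y - sol A f ystar) \<le> (1 + R / r) * delta M W ((R / r) * \<sigma>)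
       \<and> ((delta M W 0 = 0 \<and> bdd_above ((\<lambda>s. delta M W s / s) ` {0<..}))
           \<longrightarrow> norm (sol A f y - sol A f ystar) \<le> (2 * mu_MW M W + 1) * (R / r) * \<sigma>)"
proof -
  define \<kappa> where "\<kappa> = R / r"
  define u where "u = sol A f y"
  define w where "w = orth_proj W u"
  define us where "us = ustar (kstar w) w"
  have \<kappa>: "0 \<le> \<kappa>"
    using rR unfolding \<kappa>_def by simp
  note equiv = resid_bounds[OF A_iso rR(1) A_bound]
  have w: "w \<in> W" "u - w \<in> orthogonal_comp W"
    unfolding w_def using orth_proj_in[OF W_fd] orth_proj_residual[OF W_fd] by auto
  obtain k where k: "k < K" "u \<in> Mk k"
    using M_cover M_def y_in unfolding u_def by blast
  have pbdw_k: "norm (ustar k w - u) \<le> \<sigma>"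
    using k w Vbar_fd mu_finite admissible eps_bound pbdw
    by (subst norm_minus_commute, intro pbdw_error_le[OF W_fd, of "Vbar k" _ _ u "ubar k" w]) auto
  have "(INF y'\<in>Y. resid A f us y') \<le> (INF y'\<in>Y. resid A f (ustar k w) y')"
    using selection w(1) k(1) unfolding us_def by blast
  moreover have "\<forall>y'\<in>Y. resid A f us ystar \<le> resid A f us y'"
    using ystar_min unfolding us_def w_def u_def .
  ultimately have us_k: "norm (us - sol A f ystar) \<le> \<kappa> * norm (ustar k w - u)"
    and us_quasi: "norm (us - sol A f ystar) \<le> \<kappa> * norm (u - us)"
    using residual_selection_error[where res = "resid A f" and u = "sol A f" and v = us
        and v' = "ustar k w", OF equiv rR(1) y_in ystar_in]
    unfolding \<kappa>_def u_def by (simp_all add: norm_minus_commute)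
  have us_close: "norm (us - sol A f ystar) \<le> \<kappa> * \<sigma>"
    by (rule order_trans[OF us_k mult_left_mono[OF pbdw_k \<kappa>]])
  have "us \<in> (+) w ` orthogonal_comp W"
    using pbdw selection w(1) unfolding us_def by blast
  then have "u - us \<in> orthogonal_comp W"
    by (rule subspace_diff_translate[OF subspace_orthogonal_comp w(2)])
  moreover have "bounded M"
    unfolding M_def using equiv by (blast intro: bounded_sol_image[OF Y_compact f_cont rR(1)])
  ultimately show ?thesis
    using error_bounds_via_estimate[where M = M and u = u and u' = "sol A f ystar" and v = us]
      M_def y_in ystar_in us_quasi us_close \<kappa> sigma_nonneg
    unfolding \<kappa>_def u_def by blast
qed

end
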